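(* Consider a complete 4-node network with nodes $A,B,C,D$, where for each ordered pair of distinct nodes $(X,Y)$ the directed link $XY$ has capacity $XY>0$. Define \[ I^*=\min\{BA+CA,BA+DA,CA+DA,AB+CB,AB+DB,CB+DB,AC+BC,AC+DC,BC+DC,AD+BD,AD+CD,BD+CD\}, \] and for distinct nodes $X,Y$ write $\widehat{XY}=XY+YX$. Then for any positive value $R<I^*$, there is a set of three distinct nodes $\{X,Y,Z\}$ such that $\widehat{XY}>R$ and $\widehat{XZ}>R$.
   Context: Here $XY$ denotes the capacity (maximum number of bits per unit time) of the directed link from node $X$ to node $Y$. *)

theory Defs
  imports Main "HOL.Real"
begin

datatype node = A | B | C | D

definition Istar :: "(node \<Rightarrow> node \<Rightarrow> real) \<Rightarrow> real" where
  "Istar c = Min {c B A + c C A, c B A + c D A, c C A + c D A,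
                  c A B + c C B, c A B + c D B, c C B + c D B,
                  c A C + c B C, c A C + c D C, c B C + c D C,
                  c A D + c B D, c A D + c C D, c B D + c C D}"

definition hatcap :: "(node \<Rightarrow> node \<Rightarrow> real) \<Rightarrow> node \<Rightarrow> node \<Rightarrow> real" where
  "hatcap c X Y = c X Y + c Y X"

end

theory Submission
  imports Defs
begin

text \<open>Call a pair of nodes heavy if its two-way capacity exceeds R. Around any 4-cycle
  X Y Z W the two-way capacities add up to the capacities entering the four nodes from
  their two cycle neighbours, and each of these in-sums is at least I*; so every 4-cycle
  contains a heavy pair. In K4 the heavy pairs therefore cannot form a matching: every
  matching lies in a perfect matching, whose complement is a 4-cycle.\<close>

lemma Istar_le:
  assumes "x \<in> {c B A + c C A, c B A + c D A, c C A + c D A,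
                  c A B + c C B, c A B + c D B, c C B + c D B,
                  c A C + c B C, c A C + c D C, c B C + c D C,
                  c A D + c B D, c A D + c C D, c B D + c C D}"
  shows "Istar c \<le> x"
  unfolding Istar_def using assms by (rule Min_le[rotated]) simp

lemma Istar_le_in_pair:
  assumes "Y \<noteq> X" "Z \<noteq> X" "Y \<noteq> Z"
  shows "Istar c \<le> c Y X + c Z X"
  using assms by (cases X; cases Y; cases Z) (auto intro!: Istar_le simp: add.commute)

lemma hatcap_commute: "hatcap c X Y = hatcap c Y X"
  unfolding hatcap_def by simp

lemma hatcap_cycle_sum:
  "hatcap c X Y + hatcap c Y Z + hatcap c Z W + hatcap c W X =
     (c Y X + c W X) + (c X Y + c Z Y) + (c Y Z + c W Z) + (c Z W + c X W)"
  unfolding hatcap_def by simp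

lemma Istar_le_hatcap_cycle:
  assumes "distinct [X, Y, Z, W]"
  shows "4 * Istar c \<le> hatcap c X Y + hatcap c Y Z + hatcap c Z W + hatcap c W X"
  using assms Istar_le_in_pair[of Y X W c] Istar_le_in_pair[of X Y Z c]
    Istar_le_in_pair[of Y Z W c] Istar_le_in_pair[of Z W X c]
  unfolding hatcap_cycle_sum by auto

lemma K4_cycle_cover_has_adjacent_pair:
  fixes P :: "node \<Rightarrow> node \<Rightarrow> bool"
  assumes sym: "\<And>X Y. P X Y = P Y X"
    and cycle: "\<And>X Y Z W. distinct [X, Y, Z, W] \<Longrightarrow> P X Y \<or> P Y Z \<or> P Z W \<or> P W X"
  shows "\<exists>X Y Z. X \<noteq> Y \<and> X \<noteq> Z \<and> Y \<noteq> Z \<and> P X Y \<and> P X Z"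
proof -
  have "P A B \<or> P B C \<or> P C D \<or> P D A" "P A B \<or> P B D \<or> P D C \<or> P C A"
    "P A C \<or> P C B \<or> P B D \<or> P D A"
    using cycle by simp_all
  then show ?thesis
    using sym by (metis node.distinct)
qed

theorem corollary1:
  fixes c :: "node \<Rightarrow> node \<Rightarrow> real" and R :: real
  assumes pos: "\<And>X Y. X \<noteq> Y \<Longrightarrow> c X Y > 0"
    and R_pos: "R > 0"
    and R_lt: "R < Istar c"
  shows "\<exists>X Y Z. X \<noteq> Y \<and> X \<noteq> Z \<and> Y \<noteq> Z \<and>
                 hatcap c X Y > R \<and> hatcap c X Z > R"
proof (rule K4_cycle_cover_has_adjacent_pair)
  show "(hatcap c X Y > R) = (hatcap c Y X > R)" for X Y
    by (simp add: hatcap_commute)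
next
  fix X Y Z W :: node
  assume "distinct [X, Y, Z, W]"
  then have "4 * R < hatcap c X Y + hatcap c Y Z + hatcap c Z W + hatcap c W X"
    using Istar_le_hatcap_cycle[of X Y Z W c] R_lt by linarith
  then show "hatcap c X Y > R \<or> hatcap c Y Z > R \<or> hatcap c Z W > R \<or> hatcap c W X > R"
    by linarith
qed

end
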